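(* Let $0\le k<d$ and let $L(X)\in\mathbb F_{q^2}[X]$ satisfy $L(0)\neq0$, $\deg L=t<(q+1)/d$, and $L$ has no root in $A_k$. (i) If there exist an integer $0\le\tau<(q+1)/d$ and $\lambda\in\mu_{q+1}$ such that $\tilde L(x)/L(x)=\lambda x^\tau$ for all $x\in A_k$, then either $\tau=0$ or $(q+1)/d-t\le\tau\le t$. (ii) For $\lambda\in\mu_{q+1}$: $\tilde L(x)/L(x)=\lambda$ for all $x\in A_k$ if and only if $\tilde L(X)=\lambda L(X)$. (iii) For $\lambda\in\mu_{q+1}$ and an integer $\tau$ with $(q+1)/d-t\le\tau\le t$: $\tilde L(x)/L(x)=\lambda x^\tau$ for all $x\in A_k$ if and only if $L(X)=P(X)+X^{(q+1)/d-\tau}Q(X)$ for some $P,Q\in\mathbb F_{q^2}[X]$ with $\deg P=t-\tau$, $\tilde P=\lambda P$, $\deg Q=\tau+t-(q+1)/d$ and $\tilde Q=\lambda\epsilon^kQ$.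
   Context: $q$ is a prime power, $d$ is a positive divisor of $q+1$, and $\epsilon\in\mathbb F_{q^2}^*$ has multiplicative order $d$. $\mu_m$ denotes the subgroup of order $m$ of $\mathbb F_{q^2}^*$. For $0\le k<d$, $A_k=\{x\in\mu_{q+1}: x^{(q+1)/d}=\epsilon^k\}$. For $a\in\mathbb F_{q^2}$, $\bar a=a^q$. For $f(X)=\sum_{i=0}^n a_iX^i\in\mathbb F_{q^2}[X]$ with $a_n\neq0$, $\bar f(X)=\sum_{i=0}^n\bar a_iX^i$ and $\tilde f(X)=X^n\bar f(X^{-1})=\sum_{i=0}^n\bar a_iX^{n-i}$. *)

theory Defs
  imports "HOL-Computational_Algebra.Computational_Algebra" "HOL-Library.Cardinality"
begin

definition qbar :: "nat \<Rightarrow> 'a::field \<Rightarrow> 'a" where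
  "qbar q a = a ^ q"

text \<open>For f = sum a_i X^i of degree n: tilde f = X^n fbar(1/X) = sum conj(a_i) X^(n-i).\<close>
definition qtilde :: "nat \<Rightarrow> 'a::field poly \<Rightarrow> 'a poly" where
  "qtilde q f = (\<Sum>i\<le>degree f. monom (qbar q (coeff f i)) (degree f - i))"

definition mu :: "nat \<Rightarrow> 'a::field set" where
  "mu m = {x. x ^ m = 1}"

definition Aset :: "nat \<Rightarrow> nat \<Rightarrow> 'a::field \<Rightarrow> nat \<Rightarrow> 'a set" where
  "Aset q d eps k = {x \<in> mu (q + 1). x ^ ((q + 1) div d) = eps ^ k}"

end

theory Submission
  imports Defs
begin

text \<open>Put m = (q+1)/d. Every x in A_k satisfies x^m = eps^k, and counting fibres of x \<mapsto> x^m on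
  the multiplicative group shows |A_k| = m. As tilde L and L have degree below m, the identity
  tilde L(x) = lam x^tau L(x) on A_k is therefore equivalent to the polynomial identity
  tilde L = lam (X^tau L mod (X^m - eps^k)). Comparing the coefficients of X^0 and X^t, which are
  nonzero on the left, gives (i); tau = 0 gives (ii). For (iii) split L = P + X^(m-tau) Q with
  deg P < m - tau: then tilde L = X^tau tilde P + tilde Q, and the identity separates by degree
  into tilde P = lam P and tilde Q = lam eps^k Q.\<close>

lemma power_card_minus_1_eq_1:
  fixes x :: "'a::{field,finite}"
  assumes "x \<noteq> 0"
  shows "x ^ (CARD('a) - 1) = 1"
proof -
  let ?U = "UNIV - {0::'a}"
  have "x ^ card ?U * \<Prod>?U = (\<Prod>y\<in>?U. x * y)"
    by (simp add: prod.distrib)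
  also have "\<dots> = \<Prod>?U"
    by (rule prod.reindex_bij_witness[of _ "\<lambda>y. y / x" "\<lambda>y. x * y"]) (use assms in auto)
  finally have "x ^ card ?U = 1"
    by simp
  thus ?thesis
    by (simp add: card_Diff_singleton)
qed

lemma card_fibre_eq_if_card_le:
  fixes f :: "'a \<Rightarrow> 'b"
  assumes "finite S" "finite T" "f ` S \<subseteq> T" "card T \<le> a" "card S = a * b"
    and fibre_le: "\<And>y. y \<in> T \<Longrightarrow> card {x\<in>S. f x = y} \<le> b"
    and "y \<in> T"
  shows "card {x\<in>S. f x = y} = b"
proof -
  have "card S = (\<Sum>y\<in>T. card {x\<in>S. f x = y})"
    using sum.group[OF assms(1-3), of "\<lambda>_. 1::nat"] by simp
  hence "card S + (\<Sum>y\<in>T. b - card {x\<in>S. f x = y}) = card T * b"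
    using fibre_le by (simp flip: sum.distrib)
  moreover have "card T * b \<le> card S"
    using assms(4,5) by simp
  ultimately have "(\<Sum>y\<in>T. b - card {x\<in>S. f x = y}) = 0"
    by linarith
  thus ?thesis
    using assms(2,7) fibre_le[OF assms(7)] by (simp add: le_antisym)
qed

lemma card_power_eq_le:
  fixes c :: "'a::field"
  assumes "m > 0"
  shows "card {x. x ^ m = c} \<le> m"
proof -
  let ?p = "monom 1 m - [:c:]"
  have "coeff ?p m = 1"
    using assms by (simp add: coeff_pCons split: nat.split)
  hence "?p \<noteq> 0" "m \<le> degree ?p"
    by (metis coeff_0 zero_neq_one, simp add: le_degree)
  moreover have "degree ?p \<le> m"
    by (rule order.trans[OF degree_diff_le_max]) (simp add: degree_monom_le)
  moreover have "{x. x ^ m = c} = {x. poly ?p x = 0}"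
    by (simp add: poly_monom)
  ultimately show ?thesis
    using card_poly_roots_bound[of ?p] by simp
qed

text \<open>The equation x^m = c with c^e = 1 has exactly m solutions when m e = |F| - 1: every fibre of
  x \<mapsto> x^m on the e m units has at most m points, and the image lies in the e-th roots of unity.\<close>
lemma card_power_eq:
  fixes c :: "'a::{field,finite}"
  assumes me: "m * e = CARD('a) - 1" and c: "c ^ e = 1"
  shows "card {x. x ^ m = c} = m"
proof -
  have "CARD('a) \<ge> 2"
    using card_mono[of UNIV "{0::'a, 1}"] by simp
  hence pos: "m > 0" "e > 0"
    using me by (auto intro!: Nat.gr0I)
  let ?S = "{x::'a. x \<noteq> 0}" and ?T = "{y::'a. y ^ e = 1}"
  have "card {x\<in>?S. x ^ m = c} = m"
  proof (rule card_fibre_eq_if_card_le[where a = e])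
    show "(\<lambda>x. x ^ m) ` ?S \<subseteq> ?T"
    proof clarify
      fix x :: 'a
      assume "x \<noteq> 0"
      hence "x ^ (m * e) = 1"
        unfolding me by (rule power_card_minus_1_eq_1)
      thus "(x ^ m) ^ e = 1"
        by (simp add: power_mult)
    qed
    show "card ?T \<le> e"
      using pos(2) by (rule card_power_eq_le)
    have "?S = UNIV - {0}"
      by auto
    thus "card ?S = e * m"
      using me by (simp add: card_Diff_singleton mult.commute)
    show "card {x\<in>?S. x ^ m = y} \<le> m" for y
      using card_mono[of "{x. x ^ m = y}" "{x\<in>?S. x ^ m = y}"] card_power_eq_le[OF pos(1), of y]
      by (auto intro: order.trans)
  qed (use c in auto)
  moreover have "{x\<in>?S. x ^ m = c} = {x. x ^ m = c}"
    using c pos by (auto simp: zero_power)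
  ultimately show ?thesis
    by simp
qed

lemma poly_cutoff_add_monom_mult_poly_shift:
  "poly_cutoff s p + monom 1 s * poly_shift s p = (p :: 'a::comm_semiring_1 poly)"
  by (rule poly_eqI) (auto simp: coeff_poly_cutoff coeff_monom_mult coeff_poly_shift)

lemma poly_cutoff_add_monom_mult:
  fixes p r :: "'a::comm_semiring_1 poly"
  assumes "degree p < s"
  shows "poly_cutoff s (p + monom 1 s * r) = p"
  using assms by (intro poly_eqI) (auto simp: coeff_poly_cutoff coeff_monom_mult coeff_eq_0)

lemma poly_shift_add_monom_mult:
  fixes p r :: "'a::comm_semiring_1 poly"
  assumes "degree p < s"
  shows "poly_shift s (p + monom 1 s * r) = r"
  using assms by (intro poly_eqI) (auto simp: coeff_poly_shift coeff_monom_mult coeff_eq_0)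

lemma degree_poly_shift: "degree (poly_shift n p) = degree p - n"
proof (rule antisym)
  show "degree (poly_shift n p) \<le> degree p - n"
    by (rule degree_le) (auto simp: coeff_poly_shift coeff_eq_0)
  show "degree p - n \<le> degree (poly_shift n p)"
  proof (cases "n \<le> degree p \<and> p \<noteq> 0")
    case True
    thus ?thesis
      by (intro le_degree) (simp add: coeff_poly_shift)
  qed auto
qed

lemma monom_mult_add_eq_iff:
  fixes p p' r r' :: "'a::comm_semiring_1 poly"
  assumes "degree p < s" "degree p' < s"
  shows "monom 1 s * r + p = monom 1 s * r' + p' \<longleftrightarrow> r = r' \<and> p = p'"
  using poly_cutoff_add_monom_mult[OF assms(1), of r] poly_cutoff_add_monom_mult[OF assms(2), of r']
    poly_shift_add_monom_mult[OF assms(1), of r] poly_shift_add_monom_mult[OF assms(2), of r']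
  by (metis add.commute)

text \<open>For \<tau> \<le> m and degree p < m this is X^\<tau> p reduced modulo X^m - c.\<close>
definition twisted_shift :: "nat \<Rightarrow> 'a \<Rightarrow> nat \<Rightarrow> 'a::comm_semiring_1 poly \<Rightarrow> 'a poly" where
  "twisted_shift m c \<tau> p = monom 1 \<tau> * poly_cutoff (m - \<tau>) p + smult c (poly_shift (m - \<tau>) p)"

lemma coeff_twisted_shift:
  assumes "\<tau> \<le> m"
  shows "coeff (twisted_shift m c \<tau> p) j =
    (if \<tau> \<le> j \<and> j < m then coeff p (j - \<tau>) else 0) + c * coeff p (j + (m - \<tau>))"
  using assms by (auto simp: twisted_shift_def coeff_monom_mult coeff_poly_cutoff coeff_poly_shift)

lemma degree_twisted_shift_less:
  assumes "degree p < m" "\<tau> \<le> m"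
  shows "degree (twisted_shift m c \<tau> p) < m"
proof -
  have "degree (twisted_shift m c \<tau> p) \<le> m - 1"
    using assms by (intro degree_le) (auto simp: coeff_twisted_shift coeff_eq_0)
  thus ?thesis
    using assms(1) by linarith
qed

lemma twisted_shift_0:
  assumes "degree p < m"
  shows "twisted_shift m c 0 p = p"
  using assms by (intro poly_eqI) (auto simp: coeff_twisted_shift coeff_eq_0)

lemma poly_twisted_shift:
  fixes p :: "'a::comm_ring_1 poly"
  assumes "x ^ m = c" "\<tau> \<le> m"
  shows "poly (twisted_shift m c \<tau> p) x = x ^ \<tau> * poly p x"
proof -
  have "c = x ^ \<tau> * x ^ (m - \<tau>)"
    using assms by (simp flip: power_add)
  moreover have "poly p x = poly (poly_cutoff (m - \<tau>) p) x + x ^ (m - \<tau>) * poly (poly_shift (m - \<tau>) p) x"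
    by (subst (1) poly_cutoff_add_monom_mult_poly_shift[symmetric, of _ "m - \<tau>"]) (simp add: poly_monom)
  ultimately show ?thesis
    by (simp add: twisted_shift_def poly_monom algebra_simps)
qed

text \<open>Polynomials of degree below m are determined by their values on m roots of X^m - c.\<close>
lemma eq_smult_twisted_shift_iff:
  fixes f p :: "'a::idom poly"
  assumes "card A \<ge> m" "\<And>x. x \<in> A \<Longrightarrow> x ^ m = c"
    and "degree f < m" "degree p < m" "\<tau> \<le> m"
  shows "(\<forall>x\<in>A. poly f x = lam * x ^ \<tau> * poly p x) \<longleftrightarrow> f = smult lam (twisted_shift m c \<tau> p)"
proof
  assume "\<forall>x\<in>A. poly f x = lam * x ^ \<tau> * poly p x"
  thus "f = smult lam (twisted_shift m c \<tau> p)"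
    using assms degree_twisted_shift_less[OF assms(4,5), of c]
      degree_smult_le[of lam "twisted_shift m c \<tau> p"]
    by (intro poly_eqI_degree[of A]) (auto simp: poly_twisted_shift)
qed (use assms in \<open>auto simp: poly_twisted_shift\<close>)

lemma coeff_qtilde:
  "coeff (qtilde q f) j = (if j \<le> degree f then coeff f (degree f - j) ^ q else 0)"
proof -
  have "coeff (qtilde q f) j = (\<Sum>i\<le>degree f. if i = degree f - j \<and> j \<le> degree f then coeff f i ^ q else 0)"
    unfolding qtilde_def qbar_def coeff_sum coeff_monom by (intro sum.cong) auto
  thus ?thesis
    by (simp add: sum.delta)
qed

lemma degree_qtilde_le: "degree (qtilde q f) \<le> degree f"
  by (rule degree_le) (simp add: coeff_qtilde)

lemma qtilde_add_monom_mult: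
  fixes p r :: "'a::field poly"
  assumes "q > 0" "r \<noteq> 0" "degree p < s" "degree p + \<tau> = degree r + s"
  shows "qtilde q (p + monom 1 s * r) = monom 1 \<tau> * qtilde q p + qtilde q r"
proof (rule poly_eqI)
  fix j
  have "degree (monom 1 s * r) = degree r + s"
    using assms(2) by (simp add: degree_mult_eq degree_monom_eq)
  hence deg: "degree (p + monom 1 s * r) = degree r + s"
    using assms(3) by (simp add: degree_add_eq_right)
  show "coeff (qtilde q (p + monom 1 s * r)) j = coeff (monom 1 \<tau> * qtilde q p + qtilde q r) j"
    unfolding coeff_add coeff_qtilde coeff_monom_mult deg
    using assms(1,3,4) by (auto simp: coeff_eq_0 zero_power)
qed

lemma qtilde_eq_smult_twisted_shift_exponent_bounds:
  fixes p :: "'a::field poly"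
  assumes eq: "qtilde q p = smult lam (twisted_shift m c \<tau> p)"
    and "q > 0" "coeff p 0 \<noteq> 0" "degree p < m" "0 < \<tau>" "\<tau> < m"
  shows "m - degree p \<le> \<tau> \<and> \<tau> \<le> degree p"
proof
  have "p \<noteq> 0"
    using assms(3) by auto
  hence "coeff (qtilde q p) 0 \<noteq> 0"
    using assms(2) by (simp add: coeff_qtilde)
  hence "coeff p (m - \<tau>) \<noteq> 0"
    using assms(5,6) by (simp add: eq coeff_twisted_shift)
  thus "m - degree p \<le> \<tau>"
    using le_degree by fastforce
  have "coeff (qtilde q p) (degree p) \<noteq> 0"
    using assms(2,3) by (simp add: coeff_qtilde)
  moreover have "coeff p (degree p + (m - \<tau>)) = 0"
    using assms(6) by (simp add: coeff_eq_0)
  ultimately show "\<tau> \<le> degree p"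
    using assms(6) by (auto simp: eq coeff_twisted_shift split: if_splits)
qed

lemma degree_poly_cutoff_of_qtilde_eq_smult_twisted_shift:
  fixes f :: "'a::field poly"
  assumes eq: "qtilde q f = smult lam (twisted_shift m c \<tau> f)"
    and "q > 0" "lam \<noteq> 0" "coeff f 0 \<noteq> 0" "degree f < m" "\<tau> \<le> degree f"
  shows "degree (poly_cutoff (m - \<tau>) f) = degree f - \<tau>"
proof -
  define t s where "t = degree f" and "s = m - \<tau>"
  have ts: "t - \<tau> < s" "t < m" "\<tau> + s = m" "\<tau> \<le> t"
    using assms(5,6) by (auto simp: t_def s_def)
  have coeff_eq: "coeff (qtilde q f) j = lam * ((if \<tau> \<le> j \<and> j < m then coeff f (j - \<tau>) else 0)
      + c * coeff f (j + s))" for j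
    using ts by (simp add: eq coeff_twisted_shift s_def)
  have f0: "coeff f i = 0" if "i > t" for i
    using that by (simp add: t_def coeff_eq_0)
  have "coeff (poly_cutoff s f) i = 0" if "i > t - \<tau>" for i
  proof (cases "i < s")
    case True
    have "lam * coeff f i = coeff (qtilde q f) (i + \<tau>)"
      using coeff_eq[of "i + \<tau>"] f0[of "i + \<tau> + s"] True ts by simp
    also have "\<dots> = 0"
      using that ts by (simp add: coeff_qtilde t_def)
    finally show ?thesis
      using assms(3) by (simp add: coeff_poly_cutoff)
  qed (simp add: coeff_poly_cutoff)
  moreover have "coeff (poly_cutoff s f) (t - \<tau>) \<noteq> 0"
  proof -
    have "coeff (qtilde q f) t \<noteq> 0"
      using assms(2,4) by (simp add: coeff_qtilde t_def)
    thus ?thesis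
      using coeff_eq[of t] f0[of "t + s"] ts by (simp add: coeff_poly_cutoff)
  qed
  ultimately show ?thesis
    unfolding t_def s_def by (intro antisym degree_le le_degree) auto
qed

lemma qtilde_eq_smult_twisted_shift_imp_split:
  fixes f :: "'a::field poly"
  assumes eq: "qtilde q f = smult lam (twisted_shift m c \<tau> f)"
    and "q > 0" "lam \<noteq> 0" "coeff f 0 \<noteq> 0" "degree f < m" "m - degree f \<le> \<tau>" "\<tau> \<le> degree f"
  defines "g \<equiv> poly_cutoff (m - \<tau>) f" and "h \<equiv> poly_shift (m - \<tau>) f"
  shows "degree g = degree f - \<tau>" "qtilde q g = smult lam g"
    and "degree h = \<tau> + degree f - m" "qtilde q h = smult (lam * c) h"
proof -
  show deg_g: "degree g = degree f - \<tau>"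
    unfolding g_def using assms(1-5,7) by (rule degree_poly_cutoff_of_qtilde_eq_smult_twisted_shift)
  show deg_h: "degree h = \<tau> + degree f - m"
    unfolding h_def degree_poly_shift using assms(5-7) by linarith
  have "coeff h (degree f - (m - \<tau>)) \<noteq> 0"
    using assms(4-7) by (auto simp: h_def coeff_poly_shift)
  hence "h \<noteq> 0"
    by auto
  have "monom 1 \<tau> * qtilde q g + qtilde q h = qtilde q (g + monom 1 (m - \<tau>) * h)"
    using deg_g deg_h assms(2,5-7) \<open>h \<noteq> 0\<close> by (intro qtilde_add_monom_mult[symmetric]) auto
  also have "g + monom 1 (m - \<tau>) * h = f"
    by (simp add: g_def h_def poly_cutoff_add_monom_mult_poly_shift)
  also have "qtilde q f = monom 1 \<tau> * smult lam g + smult (lam * c) h"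
    by (simp add: eq twisted_shift_def g_def h_def smult_add_right mult_smult_right)
  finally have "qtilde q g = smult lam g \<and> qtilde q h = smult (lam * c) h"
  proof (subst (asm) monom_mult_add_eq_iff)
    show "degree (qtilde q h) < \<tau>" "degree (smult (lam * c) h) < \<tau>"
      using degree_qtilde_le[of q h] degree_smult_le[of "lam * c" h] deg_h assms(5,6)
      by linarith+
  qed
  thus "qtilde q g = smult lam g" "qtilde q h = smult (lam * c) h"
    by auto
qed

lemma qtilde_eq_smult_twisted_shift_iff:
  fixes f :: "'a::field poly"
  assumes "q > 0" "lam \<noteq> 0" "coeff f 0 \<noteq> 0" "degree f < m" "m - degree f \<le> \<tau>" "\<tau> \<le> degree f"
  shows "qtilde q f = smult lam (twisted_shift m c \<tau> f) \<longleftrightarrow>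
    (\<exists>g h. f = g + monom 1 (m - \<tau>) * h
       \<and> degree g = degree f - \<tau> \<and> qtilde q g = smult lam g
       \<and> degree h = \<tau> + degree f - m \<and> qtilde q h = smult (lam * c) h)"
proof
  assume "qtilde q f = smult lam (twisted_shift m c \<tau> f)"
  note split = qtilde_eq_smult_twisted_shift_imp_split[OF this assms]
  show "\<exists>g h. f = g + monom 1 (m - \<tau>) * h
       \<and> degree g = degree f - \<tau> \<and> qtilde q g = smult lam g
       \<and> degree h = \<tau> + degree f - m \<and> qtilde q h = smult (lam * c) h"
    using split poly_cutoff_add_monom_mult_poly_shift[of "m - \<tau>" f] by metis
next
  assume "\<exists>g h. f = g + monom 1 (m - \<tau>) * h
       \<and> degree g = degree f - \<tau> \<and> qtilde q g = smult lam g
       \<and> degree h = \<tau> + degree f - m \<and> qtilde q h = smult (lam * c) h"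
  then obtain g h where f: "f = g + monom 1 (m - \<tau>) * h"
    and deg_g: "degree g = degree f - \<tau>" and g: "qtilde q g = smult lam g"
    and deg_h: "degree h = \<tau> + degree f - m" and h: "qtilde q h = smult (lam * c) h"
    by blast
  have "degree g < m - \<tau>"
    using deg_g assms(4-6) by linarith
  hence "twisted_shift m c \<tau> f = monom 1 \<tau> * g + smult c h"
    by (simp add: twisted_shift_def f poly_cutoff_add_monom_mult poly_shift_add_monom_mult)
  moreover have "h \<noteq> 0"
    using f deg_g assms(4-6) by (cases "h = 0") auto
  hence "qtilde q f = monom 1 \<tau> * qtilde q g + qtilde q h"
    unfolding f using assms(1,4-6) deg_g deg_h \<open>degree g < m - \<tau>\<close>
    by (intro qtilde_add_monom_mult) linarith+
  ultimately show "qtilde q f = smult lam (twisted_shift m c \<tau> f)"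
    by (simp add: g h smult_add_right mult_smult_right)
qed

lemma Aset_eq_power_eq:
  assumes "d dvd q + 1" "eps ^ d = 1"
  shows "Aset q d eps k = {x. x ^ ((q + 1) div d) = eps ^ k}"
proof -
  have "x ^ (q + 1) = 1" if "x ^ ((q + 1) div d) = eps ^ k" for x
  proof -
    have "x ^ (q + 1) = (x ^ ((q + 1) div d)) ^ d"
      using assms(1) by (simp flip: power_mult)
    also have "\<dots> = (eps ^ d) ^ k"
      using that by (simp flip: power_mult add: mult.commute)
    finally show ?thesis
      using assms(2) by simp
  qed
  thus ?thesis
    by (auto simp: Aset_def mu_def)
qed

lemma card_Aset:
  fixes eps :: "'a::{field,finite}"
  assumes "CARD('a) = q ^ 2" "q > 0" "d dvd q + 1" "eps ^ d = 1"
  shows "card (Aset q d eps k) = (q + 1) div d"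
proof -
  have "(q + 1) div d * (d * (q - 1)) = (q + 1) * (q - 1)"
    using assms(3) by (simp flip: mult.assoc)
  also have "\<dots> = CARD('a) - 1"
    using assms(1) by (cases q) (simp_all add: power2_eq_square)
  moreover have "(eps ^ k) ^ (d * (q - 1)) = ((eps ^ d) ^ k) ^ (q - 1)"
    by (simp flip: power_mult add: ac_simps)
  ultimately show ?thesis
    unfolding Aset_eq_power_eq[OF assms(3,4)] using assms(4) by (intro card_power_eq) simp_all
qed

lemma qtilde_ratio_on_Aset_iff:
  fixes eps :: "'a::{field,finite}" and L :: "'a poly"
  assumes "CARD('a) = q ^ 2" "q > 0" "d dvd q + 1" "eps ^ d = 1"
    and "degree L < (q + 1) div d" "\<forall>x \<in> Aset q d eps k. poly L x \<noteq> 0" "\<tau> \<le> (q + 1) div d"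
  shows "(\<forall>x \<in> Aset q d eps k. poly (qtilde q L) x / poly L x = lam * x ^ \<tau>)
    \<longleftrightarrow> qtilde q L = smult lam (twisted_shift ((q + 1) div d) (eps ^ k) \<tau> L)"
proof -
  have "(\<forall>x \<in> Aset q d eps k. poly (qtilde q L) x / poly L x = lam * x ^ \<tau>)
      \<longleftrightarrow> (\<forall>x \<in> Aset q d eps k. poly (qtilde q L) x = lam * x ^ \<tau> * poly L x)"
    using assms(6) by (simp add: divide_eq_eq)
  also have "\<dots> \<longleftrightarrow> qtilde q L = smult lam (twisted_shift ((q + 1) div d) (eps ^ k) \<tau> L)"
    using card_Aset[OF assms(1-4)] Aset_eq_power_eq[OF assms(3,4)] assms(5,7)
      degree_qtilde_le[of q L]
    by (intro eq_smult_twisted_shift_iff) auto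
  finally show ?thesis .
qed

theorem lemma2p1:
  fixes q d k t :: nat and eps :: "'a::{field,finite}" and L :: "'a poly"
  assumes q_pp: "\<exists>p n. prime p \<and> n > 0 \<and> q = p ^ n"
    and card: "CARD('a) = q ^ 2"
    and d_pos: "d > 0" and d_dvd: "d dvd q + 1"
    and eps_ord: "eps ^ d = 1" "\<forall>j. 0 < j \<and> j < d \<longrightarrow> eps ^ j \<noteq> 1"
    and k_lt: "k < d"
    and L0: "poly L 0 \<noteq> 0"
    and degL: "degree L = t" and t_lt: "t < (q + 1) div d"
    and noroot: "\<forall>x \<in> Aset q d eps k. poly L x \<noteq> 0"
  shows
    "(\<forall>(\<tau>::nat) lam. \<tau> < (q + 1) div d \<and> lam \<in> mu (q + 1) \<and>
        (\<forall>x \<in> Aset q d eps k. poly (qtilde q L) x / poly L x = lam * x ^ \<tau>)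
        \<longrightarrow> \<tau> = 0 \<or> ((q + 1) div d - t \<le> \<tau> \<and> \<tau> \<le> t))
   \<and> (\<forall>lam \<in> mu (q + 1).
        (\<forall>x \<in> Aset q d eps k. poly (qtilde q L) x / poly L x = lam)
        \<longleftrightarrow> qtilde q L = smult lam L)
   \<and> (\<forall>lam \<in> mu (q + 1). \<forall>\<tau>::nat. (q + 1) div d - t \<le> \<tau> \<and> \<tau> \<le> t \<longrightarrow>
        ((\<forall>x \<in> Aset q d eps k. poly (qtilde q L) x / poly L x = lam * x ^ \<tau>)
         \<longleftrightarrow> (\<exists>P Q. L = P + monom 1 ((q + 1) div d - \<tau>) * Q
               \<and> degree P = t - \<tau> \<and> qtilde q P = smult lam P
               \<and> degree Q = \<tau> + t - (q + 1) div d
               \<and> qtilde q Q = smult (lam * eps ^ k) Q)))"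
proof -
  obtain p n where "prime p" "n > 0" "q = p ^ n"
    using q_pp by blast
  hence q_pos: "q > 0"
    by (simp add: prime_gt_0_nat)
  define m where "m = (q + 1) div d"
  define A where "A = Aset q d eps k"
  have ratio_iff: "(\<forall>x\<in>A. poly (qtilde q L) x / poly L x = lam * x ^ \<tau>)
      \<longleftrightarrow> qtilde q L = smult lam (twisted_shift m (eps ^ k) \<tau> L)" if "\<tau> \<le> m" for \<tau> lam
    unfolding A_def m_def using that card q_pos d_dvd eps_ord(1) degL t_lt noroot
    by (intro qtilde_ratio_on_Aset_iff) (auto simp: m_def)
  have L_0: "coeff L 0 \<noteq> 0" and t_m: "t < m"
    using L0 t_lt by (simp_all add: poly_0_coeff_0 m_def)
  show ?thesis
    unfolding m_def[symmetric] A_def[symmetric]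
  proof (intro conjI allI ballI impI)
    show "\<tau> = 0 \<or> (m - t \<le> \<tau> \<and> \<tau> \<le> t)"
      if "\<tau> < m \<and> lam \<in> mu (q + 1) \<and> (\<forall>x\<in>A. poly (qtilde q L) x / poly L x = lam * x ^ \<tau>)"
      for \<tau> lam
      using that ratio_iff[of \<tau> lam] qtilde_eq_smult_twisted_shift_exponent_bounds[OF _ q_pos L_0]
        degL t_m by auto
    show "(\<forall>x\<in>A. poly (qtilde q L) x / poly L x = lam) \<longleftrightarrow> qtilde q L = smult lam L" for lam
      using ratio_iff[of 0 lam] twisted_shift_0[of L m] degL t_m by simp
    show "(\<forall>x\<in>A. poly (qtilde q L) x / poly L x = lam * x ^ \<tau>) \<longleftrightarrow>
        (\<exists>P Q. L = P + monom 1 (m - \<tau>) * Q \<and> degree P = t - \<tau> \<and> qtilde q P = smult lam P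
          \<and> degree Q = \<tau> + t - m \<and> qtilde q Q = smult (lam * eps ^ k) Q)"
      if "lam \<in> mu (q + 1)" "m - t \<le> \<tau> \<and> \<tau> \<le> t" for lam \<tau>
    proof -
      have "lam \<noteq> 0"
        using that(1) by (auto simp: mu_def)
      thus ?thesis
        using that(2) ratio_iff[of \<tau> lam] qtilde_eq_smult_twisted_shift_iff[OF q_pos _ L_0] degL t_m
        by simp
    qed
  qed
qed

end
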